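(* Let $G$ be one of the (simply connected, non-twisted) Chevalley groups $SL(n,q)$ with $n>2$, $E_6(q)$, $E_7(q)$, $E_8(q)$, $F_4(q)$, $G_2(q)$. Let $T_0$ be a split maximal torus of $G$ and $W=N_G(T_0)/T_0$ the Weyl group, acting on $\mathrm{Irr}\,T_0$ by conjugation. Then the trivial character $1_{T_0}$ is the only $W$-invariant irreducible character of $T_0$.
   Context: $q$ is a prime power; $T_0$ is a maximal torus of $G$ contained in a Borel subgroup (a product of cyclic groups of order $q-1$). *)

theory Defs
  imports Complex_Main
begin

text \<open>The Chevalley groups of the statement, recorded by their type.
  SL n is the simply connected group of type A_(n-1).\<close>
datatype chevalley_type = SL nat | E6 | E7 | E8 | F4 | G2

fun rank :: "chevalley_type \<Rightarrow> nat" where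
  "rank (SL n) = n - 1"
| "rank E6 = 6" | "rank E7 = 7" | "rank E8 = 8" | "rank F4 = 4" | "rank G2 = 2"

text \<open>Simple roots indexed 0 .. rank-1 (Bourbaki numbering shifted by one).
  cartan X i j = <alpha_i, alpha_j coroot> = 2(alpha_i,alpha_j)/(alpha_j,alpha_j).\<close>

definition E8_edge :: "nat \<Rightarrow> nat \<Rightarrow> bool" where
  "E8_edge i j \<longleftrightarrow> {i, j} \<in> {{0,2},{2,3},{3,4},{4,5},{5,6},{6,7},{1,3}}"

fun cartan :: "chevalley_type \<Rightarrow> nat \<Rightarrow> nat \<Rightarrow> int" where
  "cartan (SL n) i j = (if i = j then 2 else if i = j + 1 \<or> j = i + 1 then -1 else 0)"
| "cartan E6 i j = (if i = j then 2 else if E8_edge i j then -1 else 0)"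
| "cartan E7 i j = (if i = j then 2 else if E8_edge i j then -1 else 0)"
| "cartan E8 i j = (if i = j then 2 else if E8_edge i j then -1 else 0)"
| "cartan F4 i j = (if i = j then 2
      else if (i, j) = (1, 2) then -2
      else if (i, j) = (2, 1) then -1
      else if i = j + 1 \<or> j = i + 1 then -1 else 0)"
| "cartan G2 i j = (if i = j then 2
      else if (i, j) = (0, 1) then -1
      else if (i, j) = (1, 0) then -3 else 0)"

text \<open>Split maximal torus T_0 of the simply connected group over the finite field 'a:
  t represents the product of h_(alpha_i)(t i), i < rank; h_(alpha_i) : F_q^* \<rightarrow> T_0,
  and T_0 is the direct product of these (simply connected case).\<close>
definition torus :: "chevalley_type \<Rightarrow> (nat \<Rightarrow> 'a::field) set" where
  "torus X = {t. (\<forall>i < rank X. t i \<noteq> 0) \<and> (\<forall>i \<ge> rank X. t i = 1)}"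

definition torus_mult :: "(nat \<Rightarrow> 'a::field) \<Rightarrow> (nat \<Rightarrow> 'a) \<Rightarrow> (nat \<Rightarrow> 'a)" where
  "torus_mult s t = (\<lambda>i. s i * t i)"

text \<open>Conjugation action of the simple reflection s_i (image in W = N(T_0)/T_0):
  s_i(h_(alpha_j)(c)) = h_(alpha_j)(c) * h_(alpha_i)(c)^(-<alpha_i, alpha_j coroot>).\<close>
definition simple_refl :: "chevalley_type \<Rightarrow> nat \<Rightarrow> (nat \<Rightarrow> 'a::field) \<Rightarrow> (nat \<Rightarrow> 'a)" where
  "simple_refl X i t = t(i := t i * (\<Prod>j<rank X. t j powi (- cartan X i j)))"

inductive_set weyl_action :: "chevalley_type \<Rightarrow> ((nat \<Rightarrow> 'a::field) \<Rightarrow> (nat \<Rightarrow> 'a)) set"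
  for X where
  weyl_id: "id \<in> weyl_action X"
| weyl_step: "w \<in> weyl_action X \<Longrightarrow> i < rank X \<Longrightarrow> simple_refl X i \<circ> w \<in> weyl_action X"

text \<open>Irreducible characters of the finite abelian group T_0 are exactly its linear
  characters, i.e. homomorphisms into the multiplicative group of C.\<close>
definition irr_char :: "chevalley_type \<Rightarrow> ((nat \<Rightarrow> 'a::field) \<Rightarrow> complex) \<Rightarrow> bool" where
  "irr_char X \<chi> \<longleftrightarrow> (\<forall>t \<in> torus X. \<chi> t \<noteq> 0) \<and>
     (\<forall>s \<in> torus X. \<forall>t \<in> torus X. \<chi> (torus_mult s t) = \<chi> s * \<chi> t)"

definition W_invariant :: "chevalley_type \<Rightarrow> ((nat \<Rightarrow> 'a::field) \<Rightarrow> complex) \<Rightarrow> bool" where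
  "W_invariant X \<chi> \<longleftrightarrow> (\<forall>w \<in> weyl_action X. \<forall>t \<in> torus X. \<chi> (w t) = \<chi> t)"

end

theory Submission
  imports Defs
begin

text \<open>T_0 is generated by the coroot elements h_i(c), so a W-invariant linear character \<chi> is
  trivial as soon as each \<chi> \<circ> h_i is trivial. Conjugating h_j(c) by the simple reflection s_i
  multiplies it by h_i(c^(-a_ij)), so invariance gives \<chi>(h_i(c^(-a_ij))) = 1 for all j. If node i
  of the Dynkin diagram has a neighbour j with a_ij = -1 this already says \<chi>(h_i(c)) = 1; this
  covers every node except the long-root node of G_2 (and fails for SL_2, where a_00 = 2 only
  yields \<chi>(h_0(c^(-2))) = 1). For that node a_10 = -3 and a_11 = 2, and c = c^3 c^(-2).\<close>

definition coroot_elem :: "nat \<Rightarrow> 'a::field \<Rightarrow> nat \<Rightarrow> 'a" where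
  "coroot_elem i c = (\<lambda>j. if j = i then c else 1)"

lemma coroot_elem_in_torus: "i < rank X \<Longrightarrow> c \<noteq> 0 \<Longrightarrow> coroot_elem i c \<in> torus X"
  by (auto simp: coroot_elem_def torus_def)

lemma torus_mult_coroot_elem: "torus_mult (coroot_elem i a) (coroot_elem i b) = coroot_elem i (a * b)"
  by (auto simp: coroot_elem_def torus_mult_def)

lemma simple_refl_coroot_elem:
  assumes "j < rank X"
  shows "simple_refl X i (coroot_elem j c) =
           torus_mult (coroot_elem j c) (coroot_elem i (c powi (- cartan X i j)))"
proof -
  have "(\<Prod>k<rank X. coroot_elem j c k powi (- cartan X i k))
          = (\<Prod>k<rank X. if k = j then c powi (- cartan X i j) else 1)"
    by (rule prod.cong) (auto simp: coroot_elem_def)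
  also have "\<dots> = c powi (- cartan X i j)"
    using assms by (simp add: prod.delta)
  finally show ?thesis
    by (auto simp: simple_refl_def coroot_elem_def torus_mult_def)
qed

lemma W_invariant_simple_refl:
  assumes "W_invariant X \<chi>" "i < rank X" "t \<in> torus X"
  shows "\<chi> (simple_refl X i t) = \<chi> t"
proof -
  have "simple_refl X i \<circ> id \<in> weyl_action X"
    using assms(2) by (intro weyl_step weyl_id)
  then show ?thesis
    using assms(1,3) unfolding W_invariant_def by fastforce
qed

lemma irr_char_torus_one:
  assumes "irr_char X \<chi>"
  shows "\<chi> (\<lambda>_. 1) = 1"
proof -
  have one: "(\<lambda>_. 1) \<in> torus X"
    by (simp add: torus_def)
  have "torus_mult (\<lambda>_. 1) (\<lambda>_. 1) = (\<lambda>_. 1 :: 'a)"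
    by (simp add: torus_mult_def)
  then have "\<chi> (\<lambda>_. 1) = \<chi> (\<lambda>_. 1) * \<chi> (\<lambda>_. 1)"
    using assms one unfolding irr_char_def by metis
  moreover have "\<chi> (\<lambda>_. 1) \<noteq> 0"
    using assms one unfolding irr_char_def by blast
  ultimately show ?thesis
    by simp
qed

lemma irr_char_trivial_on_coroot_elems:
  assumes "irr_char X \<chi>"
    and "\<And>i c. i < rank X \<Longrightarrow> c \<noteq> 0 \<Longrightarrow> \<chi> (coroot_elem i c) = 1"
    and "t \<in> torus X"
  shows "\<chi> t = 1"
proof -
  have "\<chi> t = 1" if "t \<in> torus X" "\<forall>i \<ge> k. t i = 1" for t and k
    using that
  proof (induction k arbitrary: t)
    case 0
    then have "t = (\<lambda>_. 1)" by auto
    then show ?case using irr_char_torus_one[OF assms(1)] by simp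
  next
    case (Suc k)
    show ?case
    proof (cases "k < rank X")
      case True
      have t': "t(k := 1) \<in> torus X" "\<forall>i \<ge> k. (t(k := 1)) i = 1"
        using Suc.prems by (auto simp: torus_def)
      have tk: "t k \<noteq> 0" using Suc.prems True by (auto simp: torus_def)
      have "t = torus_mult (t(k := 1)) (coroot_elem k (t k))"
        by (auto simp: coroot_elem_def torus_mult_def)
      then have "\<chi> t = \<chi> (t(k := 1)) * \<chi> (coroot_elem k (t k))"
        using assms(1) t'(1) coroot_elem_in_torus[OF True tk] unfolding irr_char_def by metis
      then show ?thesis using Suc.IH[OF t'] assms(2)[OF True tk] by simp
    next
      case False
      then show ?thesis using Suc by (auto simp: torus_def)
    qed
  qed
  then show ?thesis using assms(3) by (auto simp: torus_def)
qed

lemma invariant_char_coroot_elem_cartan: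
  assumes "irr_char X \<chi>" "W_invariant X \<chi>"
    and "i < rank X" "j < rank X" "c \<noteq> 0"
  shows "\<chi> (coroot_elem i (c powi (- cartan X i j))) = 1"
proof -
  have hj: "coroot_elem j c \<in> torus X" and hi: "coroot_elem i (c powi (- cartan X i j)) \<in> torus X"
    using assms(3-5) by (auto intro: coroot_elem_in_torus)
  have "\<chi> (coroot_elem j c) = \<chi> (simple_refl X i (coroot_elem j c))"
    using W_invariant_simple_refl[OF assms(2,3) hj] by simp
  also have "\<dots> = \<chi> (coroot_elem j c) * \<chi> (coroot_elem i (c powi (- cartan X i j)))"
    using assms(1) hj hi unfolding simple_refl_coroot_elem[OF assms(4)] irr_char_def by blast
  finally show ?thesis
    using assms(1) hj unfolding irr_char_def by (metis mult_cancel_left1)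
qed

lemma E8_edge_neighbour:
  assumes "i < r" "r \<le> 8" "6 \<le> r"
  shows "\<exists>j<r. j \<noteq> i \<and> E8_edge i j"
  using assms
  by (intro exI[of _ "if i = 0 then 2 else if i < 3 then 3 else i - 1"])
     (simp add: E8_edge_def doubleton_eq_iff, presburger)

lemma cartan_neighbour:
  assumes "i < rank X" "X \<noteq> G2 \<or> i = 0" "\<forall>n. X = SL n \<longrightarrow> n > 2"
  shows "\<exists>j<rank X. j \<noteq> i \<and> cartan X i j = -1"
proof (cases X)
  case (SL n)
  with assms show ?thesis
    by (intro exI[of _ "if i + 1 < n - 1 then i + 1 else i - 1"]) auto
next
  case F4
  with assms show ?thesis
    by (intro exI[of _ "if i = 0 then 1 else i - 1"]) auto
next
  case G2
  with assms show ?thesis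
    by (intro exI[of _ 1]) auto
next
  case E6
  with assms E8_edge_neighbour[of i 6] show ?thesis by auto
next
  case E7
  with assms E8_edge_neighbour[of i 7] show ?thesis by auto
next
  case E8
  with assms E8_edge_neighbour[of i 8] show ?thesis by auto
qed

lemma invariant_char_coroot_elem:
  assumes "irr_char X \<chi>" "W_invariant X \<chi>" "\<forall>n. X = SL n \<longrightarrow> n > 2"
    and "i < rank X" "c \<noteq> 0"
  shows "\<chi> (coroot_elem i c) = 1"
proof (cases "X \<noteq> G2 \<or> i = 0")
  case True
  then obtain j where j: "j < rank X" "cartan X i j = -1"
    using cartan_neighbour assms(3,4) by blast
  show ?thesis
    using invariant_char_coroot_elem_cartan[OF assms(1,2,4) j(1) assms(5)] j(2) by simp
next
  case False
  then have X: "X = G2" "i = 1" using assms(4) by auto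
  have cube: "\<chi> (coroot_elem 1 (c powi 3)) = 1"
    using invariant_char_coroot_elem_cartan[OF assms(1,2), of 1 0 c] X assms(5) by simp
  have inv_square: "\<chi> (coroot_elem 1 (c powi (-2))) = 1"
    using invariant_char_coroot_elem_cartan[OF assms(1,2), of 1 1 c] X assms(5) by simp
  have "c powi 3 * c powi (-2) = c"
    using assms(5) by (simp add: power_int_minus field_simps power2_eq_square power3_eq_cube)
  then have split: "coroot_elem 1 c = torus_mult (coroot_elem 1 (c powi 3)) (coroot_elem 1 (c powi (-2)))"
    by (simp add: torus_mult_coroot_elem)
  have "coroot_elem 1 (c powi 3) \<in> torus X" "coroot_elem 1 (c powi (-2)) \<in> torus X"
    using X assms(5) by (auto intro: coroot_elem_in_torus)
  then have "\<chi> (coroot_elem 1 c) = \<chi> (coroot_elem 1 (c powi 3)) * \<chi> (coroot_elem 1 (c powi (-2)))"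
    using assms(1) unfolding split irr_char_def by blast
  then show ?thesis
    unfolding cube inv_square X(2) by (rule trans) simp
qed

theorem proposition4p16:
  fixes X :: chevalley_type and \<chi> :: "(nat \<Rightarrow> 'a::{field,finite}) \<Rightarrow> complex"
  assumes "\<forall>n. X = SL n \<longrightarrow> n > 2"
    and "irr_char X \<chi>"
    and "W_invariant X \<chi>"
  shows "\<forall>t \<in> torus X. \<chi> t = 1"
  using irr_char_trivial_on_coroot_elems[OF assms(2)]
    invariant_char_coroot_elem[OF assms(2,3,1)] by blast

end
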